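(* Every $g=(A,v)\in\mathrm{Aff}(n,\mathbb{C})$ with $|\det A|=1$ is a product of at most four coninvolutions in $\mathrm{Aff}(n,\mathbb{C})$.
   Context: $\mathrm{Aff}(n,\mathbb{C})$ is the group of affine maps $z\mapsto Az+v$ of $\mathbb{C}^n$, written $g=(A,v)$ with $A\in\mathrm{GL}(n,\mathbb{C})$, $v\in\mathbb{C}^n$; the product is composition, $(A,v)(B,w)=(AB,Aw+v)$, and the identity is $e=(I_n,0)$. For $g=(A,v)$ set $\overline{g}=(\overline{A},\overline{v})$ (entrywise complex conjugation). An element $h$ is a coninvolution if $h\overline{h}=e$. *)

theory Defs
  imports "HOL-Analysis.Analysis"
begin

text \<open>Elements of Aff(n,C): pairs (A, v) with A an invertible complex n x n matrix
  and v a vector in C^n, representing z \<mapsto> A z + v. The dimension n is CARD('n).\<close>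

type_synonym 'n aff = "(complex^'n^'n) \<times> (complex^'n)"

definition in_Aff :: "'n::finite aff \<Rightarrow> bool" where
  "in_Aff g \<longleftrightarrow> invertible (fst g)"

definition aff_mult :: "'n::finite aff \<Rightarrow> 'n aff \<Rightarrow> 'n aff" where
  "aff_mult g h = (fst g ** fst h, fst g *v snd h + snd g)"

definition aff_id :: "'n::finite aff" where
  "aff_id = (mat 1, 0)"

definition aff_conj :: "'n::finite aff \<Rightarrow> 'n aff" where
  "aff_conj g = ((\<chi> i j. cnj (fst g $ i $ j)), (\<chi> i. cnj (snd g $ i)))"

definition coninvolution :: "'n::finite aff \<Rightarrow> bool" where
  "coninvolution h \<longleftrightarrow> aff_mult h (aff_conj h) = aff_id"

end

(*
  Put A = S J S^-1 with J in Jordan form. As |det A| = 1, the diagonal d of J can be split as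
  d_k = delta_k c_k such that delta_k never equals 1, c takes distinct values wherever d takes equal
  ones, and both diag delta and diag c are products of two coninvolutory matrices: their entries
  come in pairs a, 1/conj a up to unimodular fixed points, so diag f = P (P diag f) for a
  permutation matrix P. Then J = diag delta * M with M bidiagonal with diagonal c; the c_k being
  distinct within every Jordan block, M = V diag c V^-1 for an upper unitriangular V, and
  W |-> V W conj(V)^-1 preserves coninvolutory matrices. Hence A = X Y with X, Y products of two
  coninvolutory matrices and I - X invertible; solving (I - X) t = v places the translation v into
  the first two of the four affine coninvolutions.

  For the split, the entries of modulus different from 1 are listed with the moduli > 1 first and
  the factors are read off the recursion a_(p+1) = d_p conj(a_p): the moduli of the a_p are the
  partial products of the |d_p|, which rise and then fall back to 1, so they exceed 1 in between.
*)
theory Submission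
  imports Defs "Jordan_Normal_Form.Jordan_Normal_Form_Existence"
begin

hide_const (open) Determinant.det Matrix.mat
no_notation Matrix.vec_index (infixl \<open>$\<close> 100)

section \<open>Coninvolutory matrices and affine coninvolutions\<close>

definition mat_cnj :: "complex^'m^'n \<Rightarrow> complex^'m^'n" where
  "mat_cnj X = (\<chi> i j. cnj (X $ i $ j))"

definition vec_cnj :: "complex^'n \<Rightarrow> complex^'n" where
  "vec_cnj x = (\<chi> i. cnj (x $ i))"

lemma mat_cnj_mult: "mat_cnj (X ** Y) = mat_cnj X ** mat_cnj Y"
  by (simp add: mat_cnj_def matrix_matrix_mult_def Finite_Cartesian_Product.vec_eq_iff)

lemma mat_cnj_mat_1 [simp]: "mat_cnj (mat 1) = mat 1"
  by (simp add: mat_cnj_def Finite_Cartesian_Product.mat_def Finite_Cartesian_Product.vec_eq_iff)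

lemma mat_cnj_cnj [simp]: "mat_cnj (mat_cnj X) = X"
  by (simp add: mat_cnj_def Finite_Cartesian_Product.vec_eq_iff)

lemma vec_cnj_mult: "vec_cnj (X *v x) = mat_cnj X *v vec_cnj x"
  by (simp add: vec_cnj_def mat_cnj_def matrix_vector_mult_def Finite_Cartesian_Product.vec_eq_iff)

lemma vec_cnj_diff: "vec_cnj (x - y) = vec_cnj x - vec_cnj y"
  by (simp add: vec_cnj_def Finite_Cartesian_Product.vec_eq_iff)

lemma vec_cnj_0 [simp]: "vec_cnj 0 = 0"
  by (simp add: vec_cnj_def Finite_Cartesian_Product.vec_eq_iff)

lemma vec_cnj_cnj [simp]: "vec_cnj (vec_cnj x) = x"
  by (simp add: vec_cnj_def Finite_Cartesian_Product.vec_eq_iff)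

lemma aff_conj_eq: "aff_conj (C, w) = (mat_cnj C, vec_cnj w)"
  by (simp add: aff_conj_def mat_cnj_def vec_cnj_def)

lemma aff_mult_assoc: "aff_mult (aff_mult g h) k = aff_mult g (aff_mult h k)"
  by (simp add: aff_mult_def matrix_mul_assoc matrix_vector_mul_assoc matrix_vector_right_distrib
      add.assoc)

lemma aff_mult_id_right [simp]: "aff_mult g aff_id = g"
  by (simp add: aff_mult_def aff_id_def)

definition coninvolutory :: "complex^'n^'n \<Rightarrow> bool" where
  "coninvolutory W \<longleftrightarrow> W ** mat_cnj W = mat 1"

lemma coninvolutory_invertible: "coninvolutory W \<Longrightarrow> invertible W"
  unfolding coninvolutory_def using invertible_right_inverse by blast

lemma coninvolutory_consimilar:
  fixes S T W :: "complex^'n::finite^'n"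
  assumes "S ** T = mat 1" and "coninvolutory W"
  shows "coninvolutory (S ** W ** mat_cnj T)"
proof -
  have "T ** S = mat 1" using assms(1) matrix_left_right_inverse by blast
  then have inv: "mat_cnj T ** mat_cnj S = mat 1" by (metis mat_cnj_mult mat_cnj_mat_1)
  have "(S ** W ** mat_cnj T) ** mat_cnj (S ** W ** mat_cnj T)
      = S ** W ** (mat_cnj T ** mat_cnj S) ** mat_cnj W ** T"
    by (simp add: mat_cnj_mult matrix_mul_assoc)
  also have "\<dots> = S ** (W ** mat_cnj W) ** T" by (simp add: inv matrix_mul_assoc)
  finally show ?thesis using assms by (simp add: coninvolutory_def)
qed

definition coninvolutory_product :: "complex^'n^'n \<Rightarrow> bool" where
  "coninvolutory_product X \<longleftrightarrow> (\<exists>W1 W2. coninvolutory W1 \<and> coninvolutory W2 \<and> X = W1 ** W2)"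

lemma coninvolutory_product_similar:
  fixes S T X :: "complex^'n::finite^'n"
  assumes "S ** T = mat 1" and "coninvolutory_product X"
  shows "coninvolutory_product (S ** X ** T)"
proof -
  obtain W1 W2 where W: "coninvolutory W1" "coninvolutory W2" "X = W1 ** W2"
    using assms(2) by (auto simp: coninvolutory_product_def)
  have "T ** S = mat 1" using assms(1) matrix_left_right_inverse by blast
  then have inv: "mat_cnj T ** mat_cnj S = mat 1" by (metis mat_cnj_mult mat_cnj_mat_1)
  have cnj_ST: "mat_cnj S ** mat_cnj T = mat 1" by (metis assms(1) mat_cnj_mult mat_cnj_mat_1)
  have "S ** X ** T = S ** W1 ** (mat_cnj T ** mat_cnj S) ** W2 ** T"
    by (simp add: W(3) inv matrix_mul_assoc)
  also have "\<dots> = (S ** W1 ** mat_cnj T) ** (mat_cnj S ** W2 ** mat_cnj (mat_cnj T))"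
    by (simp add: matrix_mul_assoc)
  finally show ?thesis unfolding coninvolutory_product_def
    using coninvolutory_consimilar[OF assms(1) W(1)] coninvolutory_consimilar[OF cnj_ST W(2)]
    by blast
qed

lemma coninvolution_iff:
  "coninvolution (C, w) \<longleftrightarrow> coninvolutory C \<and> C *v vec_cnj w + w = 0"
  by (auto simp: coninvolution_def coninvolutory_def aff_conj_eq aff_mult_def aff_id_def)

text \<open>The conjugate of the linear coninvolution \<open>(C, 0)\<close> by the translation by \<open>t\<close>.\<close>
lemma coninvolution_shift:
  assumes "coninvolutory C"
  shows "coninvolution (C, t - C *v vec_cnj t)"
  using assms unfolding coninvolution_iff coninvolutory_def
  by (simp add: vec_cnj_diff vec_cnj_mult matrix_vector_mult_diff_distrib matrix_vector_mul_assoc)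

lemma coninvolution_in_Aff: "coninvolution h \<Longrightarrow> in_Aff h"
  by (cases h) (simp add: coninvolution_iff in_Aff_def coninvolutory_invertible)

lemma coninvolution_pair_with_translation:
  assumes "coninvolutory_product X" and "invertible (mat 1 - X)"
  shows "\<exists>h1 h2. coninvolution h1 \<and> coninvolution h2 \<and> aff_mult h1 h2 = (X, v)"
proof -
  obtain C1 C2 where C: "coninvolutory C1" "coninvolutory C2" "X = C1 ** C2"
    using assms(1) by (auto simp: coninvolutory_product_def)
  obtain B where B: "(mat 1 - X) ** B = mat 1"
    using assms(2) invertible_right_inverse by blast
  define t where "t = B *v v"
  have "aff_mult (C1, t - C1 *v vec_cnj t) (C2, vec_cnj t - C2 *v vec_cnj (vec_cnj t))
      = (X, (mat 1 - X) *v t)"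
    by (simp add: aff_mult_def C(3) matrix_vector_mult_diff_distrib matrix_vector_mult_diff_rdistrib
        matrix_vector_mul_assoc)
  also have "(mat 1 - X) *v t = v" by (simp add: t_def matrix_vector_mul_assoc B)
  finally show ?thesis using coninvolution_shift C by blast
qed

lemma aff_four_coninvolutions:
  assumes "coninvolutory_product X" and "coninvolutory_product Y" and "invertible (mat 1 - X)"
  shows "\<exists>hs :: 'n::finite aff list. length hs \<le> 4 \<and>
           (\<forall>h\<in>set hs. in_Aff h \<and> coninvolution h) \<and> foldr aff_mult hs aff_id = (X ** Y, v)"
proof -
  obtain h1 h2 where h12: "coninvolution h1" "coninvolution h2" "aff_mult h1 h2 = (X, v)"
    using coninvolution_pair_with_translation assms(1,3) by blast
  obtain C3 C4 where C: "coninvolutory C3" "coninvolutory C4" "Y = C3 ** C4"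
    using assms(2) by (auto simp: coninvolutory_product_def)
  have h34: "coninvolution (C3, 0)" "coninvolution (C4, 0)"
    using C by (simp_all add: coninvolution_iff)
  have "foldr aff_mult [h1, h2, (C3, 0), (C4, 0)] aff_id = aff_mult (aff_mult h1 h2) (C3 ** C4, 0)"
    by (simp add: aff_mult_assoc) (simp add: aff_mult_def)
  also have "\<dots> = (X ** Y, v)" unfolding h12(3) C(3) by (simp add: aff_mult_def)
  finally show ?thesis
    using h12 h34
    by (intro exI[of _ "[h1, h2, (C3, 0), (C4, 0)]"]) (auto intro: coninvolution_in_Aff)
qed

section \<open>Matrices indexed by natural numbers\<close>

definition cart_index :: "'n::finite \<Rightarrow> nat" where
  "cart_index = (SOME h. bij_betw h UNIV {..<CARD('n)})"

lemma bij_cart_index: "bij_betw (cart_index :: 'n::finite \<Rightarrow> nat) UNIV {..<CARD('n)}"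
proof -
  have "\<exists>h :: 'n \<Rightarrow> nat. bij_betw h UNIV {..<CARD('n)}"
    using ex_bij_betw_finite_nat[of "UNIV :: 'n set"] by (auto simp: atLeast0LessThan)
  then show ?thesis unfolding cart_index_def by (rule someI_ex)
qed

lemma cart_index_less [simp]: "cart_index (i :: 'n::finite) < CARD('n)"
  using bij_cart_index[where 'n='n] by (auto simp: bij_betw_def)

lemma cart_index_eq_iff [simp]: "cart_index i = cart_index j \<longleftrightarrow> i = j"
  using bij_cart_index by (auto simp: bij_betw_def inj_on_def)

lemma sum_cart_index: "(\<Sum>k\<in>UNIV. f (cart_index (k :: 'n::finite))) = (\<Sum>k<CARD('n). f k)"
  using sum.reindex_bij_betw[OF bij_cart_index, of f] by simp

lemma prod_cart_index: "(\<Prod>k\<in>UNIV. f (cart_index (k :: 'n::finite))) = (\<Prod>k<CARD('n). f k)"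
  using prod.reindex_bij_betw[OF bij_cart_index, of f] by simp

definition mat_of_fun :: "(nat \<Rightarrow> nat \<Rightarrow> 'a) \<Rightarrow> 'a^'n::finite^'n" where
  "mat_of_fun f = (\<chi> i j. f (cart_index i) (cart_index j))"

definition fun_mat_mult ::
    "nat \<Rightarrow> (nat \<Rightarrow> nat \<Rightarrow> 'a::semiring_0) \<Rightarrow> (nat \<Rightarrow> nat \<Rightarrow> 'a) \<Rightarrow> nat \<Rightarrow> nat \<Rightarrow> 'a" where
  "fun_mat_mult n f g i j = (\<Sum>k<n. f i k * g k j)"

definition diag_fun :: "(nat \<Rightarrow> 'a::zero) \<Rightarrow> nat \<Rightarrow> nat \<Rightarrow> 'a" where
  "diag_fun f i j = (if i = j then f i else 0)"

definition perm_fun :: "(nat \<Rightarrow> nat) \<Rightarrow> nat \<Rightarrow> nat \<Rightarrow> 'a::{zero,one}" where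
  "perm_fun \<rho> i j = (if j = \<rho> i then 1 else 0)"

lemma mat_of_fun_mult:
  "mat_of_fun f ** (mat_of_fun g :: 'a::semiring_1^'n::finite^'n) =
    mat_of_fun (fun_mat_mult CARD('n) f g)"
  unfolding mat_of_fun_def matrix_matrix_mult_def fun_mat_mult_def
  by (simp add: sum_cart_index[where f = "\<lambda>k. f (cart_index _) k * g k (cart_index _)"])

lemma mat_of_fun_cong:
  assumes "\<And>i j. i < CARD('n) \<Longrightarrow> j < CARD('n) \<Longrightarrow> f i j = g i j"
  shows "(mat_of_fun f :: 'a^'n::finite^'n) = mat_of_fun g"
  using assms by (simp add: mat_of_fun_def Finite_Cartesian_Product.vec_eq_iff)

lemma mat_of_fun_diag_1: "(mat_of_fun (diag_fun (\<lambda>_. 1)) :: 'a::{zero,one}^'n::finite^'n) = mat 1"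
  by (simp add: mat_of_fun_def diag_fun_def Finite_Cartesian_Product.mat_def
      Finite_Cartesian_Product.vec_eq_iff)

lemma mat_of_fun_diff: "mat_of_fun f - mat_of_fun g = mat_of_fun (\<lambda>i j. f i j - g i j)"
  by (simp add: mat_of_fun_def Finite_Cartesian_Product.vec_eq_iff)

lemma mat_cnj_mat_of_fun: "mat_cnj (mat_of_fun f) = mat_of_fun (\<lambda>i j. cnj (f i j))"
  by (simp add: mat_cnj_def mat_of_fun_def)

lemma fun_mat_mult_perm_left:
  fixes g :: "nat \<Rightarrow> nat \<Rightarrow> 'a::semiring_1"
  assumes "\<rho> i < n"
  shows "fun_mat_mult n (perm_fun \<rho>) g i j = g (\<rho> i) j"
  using assms by (simp add: fun_mat_mult_def perm_fun_def if_distrib[of "\<lambda>x. x * _"] cong: if_cong)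

lemma fun_mat_mult_diag_left:
  assumes "i < n"
  shows "fun_mat_mult n (diag_fun f) g i j = f i * g i j"
  using assms by (simp add: fun_mat_mult_def diag_fun_def if_distrib[of "\<lambda>x. x * _"] cong: if_cong)

lemma fun_mat_mult_diag_right:
  assumes "j < n"
  shows "fun_mat_mult n g (diag_fun f) i j = g i j * f j"
  using assms by (simp add: fun_mat_mult_def diag_fun_def if_distrib[of "\<lambda>x. _ * x"] cong: if_cong)

lemma det_upper_triangular_wrt:
  fixes A :: "'a::comm_ring_1^'n::finite^'n" and h :: "'n \<Rightarrow> nat"
  assumes "inj h" and "\<And>i j. h j < h i \<Longrightarrow> A $ i $ j = 0"
  shows "det A = (\<Prod>i\<in>UNIV. A $ i $ i)"
proof -
  have "(\<Prod>i\<in>UNIV. A $ i $ p i) = 0" if p: "p permutes UNIV" "p \<noteq> id" for p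
  proof -
    have "\<exists>i. h (p i) < h i"
    proof (rule ccontr)
      assume "\<not> (\<exists>i. h (p i) < h i)"
      then have le: "h i \<le> h (p i)" for i by (simp add: not_less)
      have "(\<Sum>i\<in>UNIV. h (p i) - h i) = (\<Sum>i\<in>UNIV. h (p i)) - (\<Sum>i\<in>UNIV. h i)"
        using le by (simp add: sum_subtractf_nat)
      also have "\<dots> = 0" using sum.permute[OF p(1), of h] by (simp add: comp_def)
      finally have "h (p i) = h i" for i using le by (simp add: le_antisym)
      then show False using p(2) \<open>inj h\<close> by (auto simp: fun_eq_iff inj_def)
    qed
    then obtain i where "A $ i $ p i = 0" using assms(2) by blast
    then show ?thesis by (intro prod_zero) auto
  qed
  then have "det A = (\<Sum>p\<in>{id}. of_int (sign p) * (\<Prod>i\<in>UNIV. A $ i $ p i))"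
    unfolding Determinants.det_def by (intro sum.mono_neutral_right) (auto simp: permutes_id)
  then show ?thesis by (simp add: sign_id)
qed

lemma det_mat_of_fun_upper_triangular:
  assumes "\<And>i j. j < i \<Longrightarrow> i < CARD('n) \<Longrightarrow> f i j = 0"
  shows "det (mat_of_fun f :: 'a::comm_ring_1^'n::finite^'n) = (\<Prod>k<CARD('n). f k k)"
proof -
  have "det (mat_of_fun f :: 'a^'n^'n) = (\<Prod>i\<in>UNIV. f (cart_index (i :: 'n)) (cart_index i))"
    using det_upper_triangular_wrt[of cart_index "mat_of_fun f :: 'a^'n^'n"] assms
    by (simp add: mat_of_fun_def inj_def)
  then show ?thesis by (simp add: prod_cart_index[of "\<lambda>k. f k k"])
qed

section \<open>Diagonals that are products of two coninvolutory matrices\<close>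

text \<open>Up to unimodular fixed points the values of \<open>f\<close> on \<open>K\<close> come in pairs \<open>a, 1 / cnj a\<close>;
  for a diagonal \<open>f\<close> this is what a factorization \<open>P (P diag f)\<close> with a permutation \<open>P\<close> needs.\<close>
definition conj_paired_on :: "'a set \<Rightarrow> ('a \<Rightarrow> complex) \<Rightarrow> bool" where
  "conj_paired_on K f \<longleftrightarrow> (\<exists>\<rho>. \<forall>k\<in>K. \<rho> k \<in> K \<and> \<rho> (\<rho> k) = k \<and> f (\<rho> k) * cnj (f k) = 1)"

lemma conj_paired_on_nonzero: "conj_paired_on K f \<Longrightarrow> k \<in> K \<Longrightarrow> f k \<noteq> 0"
  unfolding conj_paired_on_def by force

lemma mult_cnj_eq_1_iff_norm: "z * cnj z = 1 \<longleftrightarrow> cmod z = 1"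
proof -
  have "z * cnj z = 1 \<longleftrightarrow> (cmod z)\<^sup>2 = 1"
    by (metis complex_norm_square of_real_eq_1_iff of_real_power)
  also have "\<dots> \<longleftrightarrow> cmod z = 1" using norm_ge_zero[of z] by (smt (verit) power2_eq_1_iff)
  finally show ?thesis .
qed

lemma conj_paired_on_unimodular:
  "(\<And>k. k \<in> K \<Longrightarrow> cmod (f k) = 1) \<Longrightarrow> conj_paired_on K f"
  unfolding conj_paired_on_def by (intro exI[of _ id]) (simp add: mult_cnj_eq_1_iff_norm)

lemma conj_paired_on_Un:
  assumes "K1 \<inter> K2 = {}" and "conj_paired_on K1 f1" and "conj_paired_on K2 f2"
  shows "conj_paired_on (K1 \<union> K2) (\<lambda>k. if k \<in> K1 then f1 k else f2 k)"
proof -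
  obtain \<rho>1 \<rho>2 where \<rho>:
    "\<forall>k\<in>K1. \<rho>1 k \<in> K1 \<and> \<rho>1 (\<rho>1 k) = k \<and> f1 (\<rho>1 k) * cnj (f1 k) = 1"
    "\<forall>k\<in>K2. \<rho>2 k \<in> K2 \<and> \<rho>2 (\<rho>2 k) = k \<and> f2 (\<rho>2 k) * cnj (f2 k) = 1"
    using assms(2,3) by (auto simp: conj_paired_on_def)
  define \<rho> where "\<rho> k = (if k \<in> K1 then \<rho>1 k else \<rho>2 k)" for k
  let ?f = "\<lambda>k. if k \<in> K1 then f1 k else f2 k"
  have "\<rho> k \<in> K1 \<union> K2 \<and> \<rho> (\<rho> k) = k \<and> ?f (\<rho> k) * cnj (?f k) = 1" if "k \<in> K1 \<union> K2" for k
  proof (cases "k \<in> K1")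
    case True
    then show ?thesis using \<rho>(1) by (simp add: \<rho>_def)
  next
    case False
    then have "k \<in> K2" "\<rho>2 k \<notin> K1" using that \<rho>(2) assms(1) by auto
    then show ?thesis using \<rho>(2) False by (simp add: \<rho>_def)
  qed
  then show ?thesis unfolding conj_paired_on_def by (intro exI[of _ \<rho>] ballI)
qed

lemma conj_paired_on_reindex:
  assumes h: "bij_betw h K K'" and "conj_paired_on K' f"
  shows "conj_paired_on K (f \<circ> h)"
proof -
  obtain \<rho> where \<rho>: "\<forall>k\<in>K'. \<rho> k \<in> K' \<and> \<rho> (\<rho> k) = k \<and> f (\<rho> k) * cnj (f k) = 1"
    using assms(2) by (auto simp: conj_paired_on_def)
  define g where "g = the_inv_into K h"
  have g: "g k' \<in> K" "h (g k') = k'" if "k' \<in> K'" for k'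
    using that h unfolding g_def
    by (auto intro: the_inv_into_into f_the_inv_into_f_bij_betw simp: bij_betw_def)
  have "g (\<rho> (h k)) \<in> K \<and> g (\<rho> (h (g (\<rho> (h k))))) = k \<and> f (h (g (\<rho> (h k)))) * cnj (f (h k)) = 1"
    if "k \<in> K" for k
  proof -
    have "h k \<in> K'" "g (h k) = k"
      using that h unfolding g_def by (auto simp: bij_betw_def the_inv_into_f_f)
    then show ?thesis using \<rho> g by simp
  qed
  then show ?thesis
    unfolding conj_paired_on_def comp_def by (intro exI[of _ "\<lambda>k. g (\<rho> (h k))"] ballI)
qed

lemma conj_paired_on_adjacent:
  assumes pair: "\<And>p. s \<le> p \<Longrightarrow> even (p - s) \<Longrightarrow> Suc p < m \<Longrightarrow> f (Suc p) * cnj (f p) = 1"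
    and last: "\<And>p. s \<le> p \<Longrightarrow> even (p - s) \<Longrightarrow> Suc p = m \<Longrightarrow> cmod (f p) = 1"
  shows "conj_paired_on {s..<m} f"
proof -
  define \<rho> where "\<rho> p = (if even (p - s) then (if Suc p < m then Suc p else p) else p - 1)" for p
  have "\<rho> p \<in> {s..<m} \<and> \<rho> (\<rho> p) = p \<and> f (\<rho> p) * cnj (f p) = 1" if p: "p \<in> {s..<m}" for p
  proof (cases "even (p - s)")
    case True
    then show ?thesis
      using p pair[of p] last[of p] by (auto simp: \<rho>_def mult_cnj_eq_1_iff_norm Suc_diff_le)
  next
    case False
    then have "s < p" using p by (cases "p = s") auto
    then obtain q where q: "p = Suc q" "s \<le> q" by (cases p) auto
    then have "even (q - s)" using False by presburger
    then have "f p * cnj (f q) = 1" using pair[of q] p q by auto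
    then have "f q * cnj (f p) = 1"
      by (metis complex_cnj_cnj complex_cnj_mult complex_cnj_one mult.commute)
    then show ?thesis using False p q \<open>even (q - s)\<close> by (auto simp: \<rho>_def)
  qed
  then show ?thesis unfolding conj_paired_on_def by (intro exI[of _ \<rho>] ballI)
qed

lemma coninvolutory_product_diag:
  assumes "conj_paired_on {..<CARD('n)} f"
  shows "coninvolutory_product (mat_of_fun (diag_fun f) :: complex^'n::finite^'n)"
proof -
  let ?N = "CARD('n)"
  obtain \<rho> where \<rho>: "\<And>k. k < ?N \<Longrightarrow> \<rho> k < ?N \<and> \<rho> (\<rho> k) = k \<and> f (\<rho> k) * cnj (f k) = 1"
    using assms by (auto simp: conj_paired_on_def)
  define P where "P = (mat_of_fun (perm_fun \<rho>) :: complex^'n^'n)"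
  define D where "D = (mat_of_fun (diag_fun f) :: complex^'n^'n)"
  have cnj_P: "mat_cnj P = P"
    unfolding P_def mat_cnj_mat_of_fun by (rule mat_of_fun_cong) (simp add: perm_fun_def)
  have cnj_D: "mat_cnj D = mat_of_fun (diag_fun (\<lambda>k. cnj (f k)))"
    unfolding D_def mat_cnj_mat_of_fun by (rule mat_of_fun_cong) (simp add: diag_fun_def)
  have PP: "P ** P = mat 1"
    unfolding P_def mat_of_fun_mult mat_of_fun_diag_1[symmetric] using \<rho>
    by (intro mat_of_fun_cong) (auto simp: fun_mat_mult_perm_left perm_fun_def diag_fun_def)
  have "P ** D ** mat_cnj (P ** D) = P ** (D ** (P ** mat_cnj D))"
    by (simp add: mat_cnj_mult cnj_P matrix_mul_assoc)
  also have "\<dots> = mat_of_fun (diag_fun (\<lambda>_. 1))"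
    unfolding P_def D_def mat_cnj_mat_of_fun mat_of_fun_mult using \<rho>
    by (intro mat_of_fun_cong)
       (auto simp: fun_mat_mult_perm_left fun_mat_mult_diag_left perm_fun_def diag_fun_def)
  finally have "coninvolutory (P ** D)" by (simp add: coninvolutory_def mat_of_fun_diag_1)
  moreover have "coninvolutory P" using PP cnj_P by (simp add: coninvolutory_def)
  moreover have "D = P ** (P ** D)" by (metis PP matrix_mul_assoc matrix_mul_lid)
  ultimately show ?thesis unfolding D_def coninvolutory_product_def by blast
qed

section \<open>Splitting a diagonal of modulus one\<close>

lemma strict_mono_on_atLeastAtMost_Suc:
  fixes f :: "nat \<Rightarrow> 'a::order"
  assumes "\<And>k. a \<le> k \<Longrightarrow> k < b \<Longrightarrow> f k < f (Suc k)"
  shows "strict_mono_on {a..b} f"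
proof (rule strict_mono_onI)
  fix p q assume "p \<in> {a..b}" "q \<in> {a..b}" "p < q"
  then show "f p < f q"
  proof (induction q)
    case (Suc q)
    then have "f q < f (Suc q)" using assms by simp
    then show ?case using Suc by (cases "p = q") (auto intro: less_trans)
  qed simp
qed

primrec alt_cnj_prod :: "(nat \<Rightarrow> complex) \<Rightarrow> complex \<Rightarrow> nat \<Rightarrow> complex" where
  "alt_cnj_prod D u 0 = u"
| "alt_cnj_prod D u (Suc p) = D p * cnj (alt_cnj_prod D u p)"

definition prefix_norm :: "(nat \<Rightarrow> complex) \<Rightarrow> nat \<Rightarrow> real" where
  "prefix_norm D p = (\<Prod>q<p. cmod (D q))"

lemma prefix_norm_0 [simp]: "prefix_norm D 0 = 1"
  by (simp add: prefix_norm_def)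

lemma prefix_norm_Suc: "prefix_norm D (Suc p) = prefix_norm D p * cmod (D p)"
  by (simp add: prefix_norm_def)

lemma norm_alt_cnj_prod: "cmod u = 1 \<Longrightarrow> cmod (alt_cnj_prod D u p) = prefix_norm D p"
  by (induction p) (simp_all add: prefix_norm_def norm_mult)

lemma alt_cnj_prod_start_factor:
  "alt_cnj_prod D u p = alt_cnj_prod D 1 p * (if even p then u else cnj u)"
  by (induction p) auto

lemma alt_cnj_prod_avoid_1: "\<exists>u. cmod u = 1 \<and> u \<noteq> 1 \<and> alt_cnj_prod D u m \<noteq> 1"
proof (cases "alt_cnj_prod D (-1) m = 1")
  case True
  have "alt_cnj_prod D \<i> m \<noteq> 1"
  proof
    assume "alt_cnj_prod D \<i> m = 1"
    with True show False
      by (subst (asm) (1 2) alt_cnj_prod_start_factor) (auto simp: complex_eq_iff split: if_splits)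
  qed
  then show ?thesis by (intro exI[of _ \<i>]) (auto simp: complex_eq_iff)
next
  case False
  then show ?thesis by (intro exI[of _ "-1"]) auto
qed

text \<open>For \<open>a = alt_cnj_prod D u\<close> the numbers \<open>1 / cnj (a p)\<close> and \<open>a (p + 1) = D p * cnj (a p)\<close>
  multiply to \<open>D p\<close>; handing them alternately to the left and to the right makes neighbouring
  left factors, and neighbouring right factors, conj-paired.\<close>
definition chain_left :: "(nat \<Rightarrow> complex) \<Rightarrow> complex \<Rightarrow> nat \<Rightarrow> complex" where
  "chain_left D u p =
    (if even p then 1 / cnj (alt_cnj_prod D u p) else alt_cnj_prod D u (Suc p))"

definition chain_right :: "(nat \<Rightarrow> complex) \<Rightarrow> complex \<Rightarrow> nat \<Rightarrow> complex" where
  "chain_right D u p =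
    (if even p then alt_cnj_prod D u (Suc p) else 1 / cnj (alt_cnj_prod D u p))"

lemma norm_chain_left:
  "cmod u = 1 \<Longrightarrow>
    cmod (chain_left D u p) = (if even p then 1 / prefix_norm D p else prefix_norm D (Suc p))"
  by (simp add: chain_left_def norm_divide norm_alt_cnj_prod del: alt_cnj_prod.simps)

lemma norm_chain_right:
  "cmod u = 1 \<Longrightarrow>
    cmod (chain_right D u p) = (if even p then prefix_norm D (Suc p) else 1 / prefix_norm D p)"
  by (simp add: chain_right_def norm_divide norm_alt_cnj_prod del: alt_cnj_prod.simps)

context
  fixes D :: "nat \<Rightarrow> complex" and m n1 :: nat
  assumes nonzero: "\<And>q. q < m \<Longrightarrow> D q \<noteq> 0"
    and phases: "n1 \<le> m"
    and growing: "\<And>q. q < n1 \<Longrightarrow> 1 < cmod (D q)"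
    and shrinking: "\<And>q. n1 \<le> q \<Longrightarrow> q < m \<Longrightarrow> cmod (D q) < 1"
    and total: "prefix_norm D m = 1"
begin

lemma prefix_norm_pos: "p \<le> m \<Longrightarrow> 0 < prefix_norm D p"
  unfolding prefix_norm_def using nonzero by (intro prod_pos) auto

lemma strict_mono_prefix_norm: "strict_mono_on {0..n1} (prefix_norm D)"
proof (rule strict_mono_on_atLeastAtMost_Suc)
  fix k assume "k < n1"
  then show "prefix_norm D k < prefix_norm D (Suc k)"
    using prefix_norm_pos[of k] growing[of k] phases by (simp add: prefix_norm_Suc)
qed

lemma strict_anti_prefix_norm: "strict_mono_on {n1..m} (\<lambda>p. - prefix_norm D p)"
proof (rule strict_mono_on_atLeastAtMost_Suc)
  fix k assume "n1 \<le> k" "k < m"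
  then show "- prefix_norm D k < - prefix_norm D (Suc k)"
    using prefix_norm_pos[of k] shrinking[of k] by (simp add: prefix_norm_Suc)
qed

lemma prefix_norm_gt_1:
  assumes "0 < p" and "p < m"
  shows "1 < prefix_norm D p"
proof (cases "p \<le> n1")
  case True
  then show ?thesis using strict_mono_onD[OF strict_mono_prefix_norm, of 0 p] assms by simp
next
  case False
  then show ?thesis using strict_mono_onD[OF strict_anti_prefix_norm, of p m] assms total by simp
qed

lemma alt_cnj_prod_nonzero: "cmod u = 1 \<Longrightarrow> p \<le> m \<Longrightarrow> alt_cnj_prod D u p \<noteq> 0"
  using norm_alt_cnj_prod[of u D p] prefix_norm_pos[of p] by auto

lemma chain_left_mult_right:
  assumes "cmod u = 1" and "p < m"
  shows "chain_left D u p * chain_right D u p = D p"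
  using alt_cnj_prod_nonzero[OF assms(1), of p] assms(2)
  by (simp add: chain_left_def chain_right_def)

lemma conj_paired_chain_right:
  assumes u: "cmod u = 1"
  shows "conj_paired_on {..<m} (chain_right D u)"
proof -
  have "conj_paired_on {0..<m} (chain_right D u)"
  proof (rule conj_paired_on_adjacent)
    fix p assume "even (p - 0)" "Suc p < m"
    then show "chain_right D u (Suc p) * cnj (chain_right D u p) = 1"
      using alt_cnj_prod_nonzero[OF u, of "Suc p"]
      by (simp add: chain_right_def del: alt_cnj_prod.simps)
  next
    fix p assume "even (p - 0)" "Suc p = m"
    then show "cmod (chain_right D u p) = 1" using norm_chain_right[OF u] total by simp
  qed
  then show ?thesis by (simp add: atLeast0LessThan)
qed

lemma conj_paired_chain_left:
  assumes u: "cmod u = 1"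
  shows "conj_paired_on {..<m} (chain_left D u)"
proof (cases "m = 0")
  case False
  have "conj_paired_on {0} (chain_left D u)"
    using norm_chain_left[OF u, of D 0] by (intro conj_paired_on_unimodular) simp
  moreover have "conj_paired_on {1..<m} (chain_left D u)"
  proof (rule conj_paired_on_adjacent)
    fix p assume "1 \<le> p" "even (p - 1)" "Suc p < m"
    then show "chain_left D u (Suc p) * cnj (chain_left D u p) = 1"
      using alt_cnj_prod_nonzero[OF u, of "Suc p"]
      by (simp add: chain_left_def del: alt_cnj_prod.simps)
  next
    fix p assume "1 \<le> p" "even (p - 1)" "Suc p = m"
    moreover from this have "odd p" by presburger
    ultimately show "cmod (chain_left D u p) = 1" using norm_chain_left[OF u, of D p] total by simp
  qed
  moreover have "{..<m} = {0} \<union> {1..<m}" using False by auto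
  ultimately show ?thesis
    using conj_paired_on_Un[of "{0}" "{1..<m}" "chain_left D u" "chain_left D u"] by simp
qed (simp add: conj_paired_on_def)

lemma chain_left_neq_1:
  assumes u: "cmod u = 1" "u \<noteq> 1" "alt_cnj_prod D u m \<noteq> 1" and p: "p < m"
  shows "chain_left D u p \<noteq> 1"
proof -
  consider "p = 0" | "0 < p" "Suc p < m" | "0 < p" "Suc p = m" using p by linarith
  then show ?thesis
  proof cases
    case 1
    have "u * cnj u = 1" using u(1) mult_cnj_eq_1_iff_norm by blast
    then show ?thesis using u(2) by (auto simp: 1 chain_left_def field_simps)
  next
    case 2
    then have "cmod (chain_left D u p) \<noteq> 1"
      using prefix_norm_gt_1[of p] prefix_norm_gt_1[of "Suc p"]
      by (simp add: norm_chain_left[OF u(1)])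
    then show ?thesis by auto
  next
    case 3
    show ?thesis
    proof (cases "even p")
      case True
      then show ?thesis using prefix_norm_gt_1[of p] 3 norm_chain_left[OF u(1), of D p] by auto
    next
      case False
      then show ?thesis using u(3) 3 by (simp add: chain_left_def del: alt_cnj_prod.simps)
    qed
  qed
qed

lemma inj_on_chain_right:
  assumes u: "cmod u = 1" and inj: "inj_on (prefix_norm D) {a..b}" and "b \<le> m"
  shows "inj_on (chain_right D u) {a..<b}"
proof (rule inj_onI)
  fix p q assume p: "p \<in> {a..<b}" and q: "q \<in> {a..<b}"
    and eq: "chain_right D u p = chain_right D u q"
  have parity: "1 \<le> cmod (chain_right D u k) \<longleftrightarrow> even k" if "k < m" for k
    using that prefix_norm_gt_1[of k] prefix_norm_gt_1[of "Suc k"] total prefix_norm_pos[of k]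
    by (cases "Suc k = m") (auto simp: norm_chain_right[OF u] odd_pos)
  have "even p \<longleftrightarrow> even q" using parity[of p] parity[of q] eq p q \<open>b \<le> m\<close> by auto
  define p' where "p' = (if even p then Suc p else p)"
  define q' where "q' = (if even q then Suc q else q)"
  have "prefix_norm D p' = prefix_norm D q'"
    using arg_cong[OF eq, of cmod] \<open>even p \<longleftrightarrow> even q\<close>
    by (auto simp: p'_def q'_def norm_chain_right[OF u])
  moreover have "p' \<in> {a..b}" "q' \<in> {a..b}" using p q by (auto simp: p'_def q'_def)
  ultimately have "p' = q'" using inj by (auto dest: inj_onD)
  then show "p = q" using \<open>even p \<longleftrightarrow> even q\<close> by (auto simp: p'_def q'_def split: if_splits)
qed

lemma chain_split:
  "\<exists>\<delta> c. (\<forall>p<m. \<delta> p * c p = D p \<and> \<delta> p \<noteq> 1) \<and>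
     conj_paired_on {..<m} \<delta> \<and> conj_paired_on {..<m} c \<and> inj_on c {..<n1} \<and> inj_on c {n1..<m}"
proof -
  obtain u where u: "cmod u = 1" "u \<noteq> 1" "alt_cnj_prod D u m \<noteq> 1"
    using alt_cnj_prod_avoid_1 by blast
  have "inj_on (chain_right D u) {0..<n1}"
    using strict_mono_on_imp_inj_on[OF strict_mono_prefix_norm] phases
    by (intro inj_on_chain_right u)
  moreover have "inj_on (chain_right D u) {n1..<m}"
    using strict_mono_on_imp_inj_on[OF strict_anti_prefix_norm]
    by (intro inj_on_chain_right u) (auto simp: inj_on_def)
  ultimately show ?thesis
    using chain_left_mult_right[OF u(1)] chain_left_neq_1[OF u] conj_paired_chain_left[OF u(1)]
      conj_paired_chain_right[OF u(1)] by (auto simp: atLeast0LessThan)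
qed

end

lemma obtain_enumeration_first:
  assumes "finite K"
  obtains e :: "nat \<Rightarrow> 'a" and m n1 :: nat where "bij_betw e {..<m} K" and "n1 \<le> m"
    and "\<And>p. p < m \<Longrightarrow> P (e p) \<longleftrightarrow> p < n1"
proof -
  obtain xs where xs: "set xs = K" "distinct xs" using finite_distinct_list[OF assms] by blast
  define ys where "ys = filter P xs"
  define zs where "zs = filter (\<lambda>k. \<not> P k) xs"
  have "set (ys @ zs) = K" "distinct (ys @ zs)" using xs by (auto simp: ys_def zs_def)
  then have "bij_betw (nth (ys @ zs)) {..<length (ys @ zs)} K" by (simp add: bij_betw_nth)
  moreover have "length ys \<le> length (ys @ zs)" by simp
  moreover have "P ((ys @ zs) ! p) \<longleftrightarrow> p < length ys" if "p < length (ys @ zs)" for p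
  proof (cases "p < length ys")
    case True
    then have "(ys @ zs) ! p \<in> set ys" by (simp add: nth_append)
    then show ?thesis using True by (simp add: ys_def)
  next
    case False
    then have "(ys @ zs) ! p \<in> set zs" using that by (simp add: nth_append)
    then show ?thesis using False by (simp add: zs_def)
  qed
  ultimately show thesis by (rule that)
qed

lemma non_unimodular_split:
  fixes d :: "nat \<Rightarrow> complex"
  assumes K: "finite K" and nonzero: "\<And>k. k \<in> K \<Longrightarrow> d k \<noteq> 0"
    and non_unimodular: "\<And>k. k \<in> K \<Longrightarrow> cmod (d k) \<noteq> 1" and total: "(\<Prod>k\<in>K. cmod (d k)) = 1"
  shows "\<exists>\<delta> c. (\<forall>k\<in>K. \<delta> k * c k = d k \<and> \<delta> k \<noteq> 1) \<and> conj_paired_on K \<delta> \<and> conj_paired_on K c \<and>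
     (\<forall>i\<in>K. \<forall>j\<in>K. cmod (d i) = cmod (d j) \<longrightarrow> c i = c j \<longrightarrow> i = j)"
proof -
  obtain e and m n1 :: nat where e: "bij_betw e {..<m} K" and "n1 \<le> m"
    and phase: "\<And>p. p < m \<Longrightarrow> 1 < cmod (d (e p)) \<longleftrightarrow> p < n1"
    using obtain_enumeration_first[OF K, of "\<lambda>k. 1 < cmod (d k)"] by blast
  have "\<exists>\<delta> c. (\<forall>p<m. \<delta> p * c p = d (e p) \<and> \<delta> p \<noteq> 1) \<and> conj_paired_on {..<m} \<delta> \<and>
      conj_paired_on {..<m} c \<and> inj_on c {..<n1} \<and> inj_on c {n1..<m}"
  proof (rule chain_split)
    show "d (e q) \<noteq> 0" if "q < m" for q using that e nonzero by (auto simp: bij_betw_def)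
    show "1 < cmod (d (e q))" if "q < n1" for q using that phase \<open>n1 \<le> m\<close> by simp
    show "cmod (d (e q)) < 1" if "n1 \<le> q" "q < m" for q
      using that phase[of q] e non_unimodular[of "e q"] by (auto simp: bij_betw_def)
    show "prefix_norm (\<lambda>p. d (e p)) m = 1"
      using prod.reindex_bij_betw[OF e, of "\<lambda>k. cmod (d k)"] total by (simp add: prefix_norm_def)
  qed fact
  then obtain \<delta> c where \<delta>c: "\<forall>p<m. \<delta> p * c p = d (e p) \<and> \<delta> p \<noteq> 1"
    and paired: "conj_paired_on {..<m} \<delta>" "conj_paired_on {..<m} c"
    and inj: "inj_on c {..<n1}" "inj_on c {n1..<m}" by blast
  define g where "g = the_inv_into {..<m} e"
  have g: "bij_betw g K {..<m}" unfolding g_def by (rule bij_betw_the_inv_into[OF e])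
  have eg: "e (g k) = k" if "k \<in> K" for k
    using that e unfolding g_def by (simp add: bij_betw_def f_the_inv_into_f)
  have "i = j" if "i \<in> K" "j \<in> K" "cmod (d i) = cmod (d j)" "(c \<circ> g) i = (c \<circ> g) j" for i j
  proof -
    have "g i < m" "g j < m" using that bij_betw_apply[OF g] by auto
    moreover from this have "g i < n1 \<longleftrightarrow> g j < n1"
      using phase[of "g i"] phase[of "g j"] eg[OF that(1)] eg[OF that(2)] that(3) by simp
    ultimately have "g i = g j" using inj_onD[OF inj(1)] inj_onD[OF inj(2)] that(4) by auto
    then show ?thesis using eg[OF that(1)] eg[OF that(2)] by metis
  qed
  moreover have "(\<delta> \<circ> g) k * (c \<circ> g) k = d k \<and> (\<delta> \<circ> g) k \<noteq> 1" if "k \<in> K" for k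
    using \<delta>c eg[OF that] bij_betw_apply[OF g that] by simp
  moreover have "conj_paired_on K (\<delta> \<circ> g)" "conj_paired_on K (c \<circ> g)"
    using conj_paired_on_reindex[OF g] paired by auto
  ultimately show ?thesis by blast
qed

definition cayley_unit :: "nat \<Rightarrow> complex" where
  "cayley_unit k = (1 + \<i> * of_nat (Suc k)) / (1 - \<i> * of_nat (Suc k))"

lemma cayley_unit_props:
  shows norm_cayley_unit: "cmod (cayley_unit k) = 1"
    and cayley_unit_neq_1: "cayley_unit k \<noteq> 1"
    and inj_cayley_unit: "inj cayley_unit"
proof -
  have nz: "1 - \<i> * of_real t \<noteq> 0" for t :: real
    by (simp add: complex_eq_iff)
  have eq: "cmod (1 + \<i> * of_real t) = cmod (1 - \<i> * of_real t)" for t :: real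
    by (simp add: cmod_def)
  show "cmod (cayley_unit k) = 1"
    unfolding cayley_unit_def using eq[of "Suc k"] nz[of "Suc k"] by (simp add: norm_divide)
  show "cayley_unit k \<noteq> 1"
  proof
    assume "cayley_unit k = 1"
    then have "1 + \<i> * of_nat (Suc k) = 1 - \<i> * of_nat (Suc k)"
      using nz[of "Suc k"] unfolding cayley_unit_def by (simp add: field_simps)
    then show False by (simp add: complex_eq_iff)
  qed
  show "inj cayley_unit"
  proof (rule injI)
    fix k l assume "cayley_unit k = cayley_unit l"
    then have "(1 + \<i> * of_nat (Suc k)) * (1 - \<i> * of_nat (Suc l)) =
        (1 + \<i> * of_nat (Suc l)) * (1 - \<i> * of_nat (Suc k))"
      using nz[of "Suc k"] nz[of "Suc l"] unfolding cayley_unit_def by (simp add: field_simps)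
    then show "k = l" by (simp add: complex_eq_iff algebra_simps)
  qed
qed

lemma unimodular_split:
  fixes d :: "nat \<Rightarrow> complex"
  assumes unimodular: "\<And>k. k \<in> U \<Longrightarrow> cmod (d k) = 1"
  shows "\<exists>\<delta> c. (\<forall>k\<in>U. \<delta> k * c k = d k \<and> \<delta> k \<noteq> 1) \<and> conj_paired_on U \<delta> \<and> conj_paired_on U c \<and>
     (\<forall>i\<in>U. \<forall>j\<in>U. d i = d j \<longrightarrow> c i = c j \<longrightarrow> i = j)"
proof (intro exI conjI)
  show "conj_paired_on U (\<lambda>k. cnj (cayley_unit k))" "conj_paired_on U (\<lambda>k. d k * cayley_unit k)"
    using unimodular by (auto intro!: conj_paired_on_unimodular simp: norm_mult norm_cayley_unit)
  show "\<forall>k\<in>U. cnj (cayley_unit k) * (d k * cayley_unit k) = d k \<and> cnj (cayley_unit k) \<noteq> 1"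
  proof
    fix k
    have "cnj (cayley_unit k) * cayley_unit k = 1"
      using norm_cayley_unit[of k] by (simp add: mult_cnj_eq_1_iff_norm mult.commute)
    then show "cnj (cayley_unit k) * (d k * cayley_unit k) = d k \<and> cnj (cayley_unit k) \<noteq> 1"
      using cayley_unit_neq_1[of k] by (simp add: mult.left_commute)
  qed
  show "\<forall>i\<in>U. \<forall>j\<in>U. d i = d j \<longrightarrow> d i * cayley_unit i = d j * cayley_unit j \<longrightarrow> i = j"
    using unimodular inj_cayley_unit by (fastforce simp: inj_eq)
qed

lemma unimodular_diag_split:
  fixes d :: "nat \<Rightarrow> complex"
  assumes det: "cmod (\<Prod>k<n. d k) = 1"
  shows "\<exists>\<delta> c. (\<forall>k<n. \<delta> k * c k = d k \<and> \<delta> k \<noteq> 1) \<and>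
     conj_paired_on {..<n} \<delta> \<and> conj_paired_on {..<n} c \<and>
     (\<forall>i<n. \<forall>j<n. d i = d j \<longrightarrow> c i = c j \<longrightarrow> i = j)"
proof -
  define K where "K = {k. k < n \<and> cmod (d k) \<noteq> 1}"
  define U where "U = {k. k < n \<and> cmod (d k) = 1}"
  have KU: "K \<union> U = {..<n}" "K \<inter> U = {}" by (auto simp: K_def U_def)
  have "d k \<noteq> 0" if "k < n" for k
  proof
    assume "d k = 0"
    then have "cmod (\<Prod>k<n. d k) = 0" using that by auto
    then show False using det by simp
  qed
  then have "finite K" "\<And>k. k \<in> K \<Longrightarrow> d k \<noteq> 0" "\<And>k. k \<in> K \<Longrightarrow> cmod (d k) \<noteq> 1"
    by (auto simp: K_def)
  moreover have "(\<Prod>k\<in>K. cmod (d k)) = (\<Prod>k<n. cmod (d k))"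
    by (intro prod.mono_neutral_left) (auto simp: K_def)
  ultimately obtain \<delta>1 c1 where K: "\<forall>k\<in>K. \<delta>1 k * c1 k = d k \<and> \<delta>1 k \<noteq> 1"
    "conj_paired_on K \<delta>1" "conj_paired_on K c1"
    "\<forall>i\<in>K. \<forall>j\<in>K. cmod (d i) = cmod (d j) \<longrightarrow> c1 i = c1 j \<longrightarrow> i = j"
    using non_unimodular_split[of K d] det by (auto simp: prod_norm)
  obtain \<delta>2 c2 where U: "\<forall>k\<in>U. \<delta>2 k * c2 k = d k \<and> \<delta>2 k \<noteq> 1"
    "conj_paired_on U \<delta>2" "conj_paired_on U c2"
    "\<forall>i\<in>U. \<forall>j\<in>U. d i = d j \<longrightarrow> c2 i = c2 j \<longrightarrow> i = j"
    using unimodular_split[of U d] by (auto simp: U_def)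
  define \<delta> where "\<delta> k = (if k \<in> K then \<delta>1 k else \<delta>2 k)" for k
  define c where "c k = (if k \<in> K then c1 k else c2 k)" for k
  have "conj_paired_on {..<n} \<delta>" "conj_paired_on {..<n} c"
    using conj_paired_on_Un[OF KU(2) K(2) U(2)] conj_paired_on_Un[OF KU(2) K(3) U(3)]
    unfolding KU(1) \<delta>_def c_def by auto
  moreover have "\<delta> k * c k = d k \<and> \<delta> k \<noteq> 1" if "k < n" for k
    using K(1) U(1) KU(1) that by (cases "k \<in> K") (auto simp: \<delta>_def c_def)
  moreover have "i = j" if "i < n" "j < n" "d i = d j" "c i = c j" for i j
  proof (cases "i \<in> K")
    case True
    then have "j \<in> K" using that by (simp add: K_def)
    then show ?thesis using True K(4) that by (simp add: c_def)
  next
    case False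
    then have "i \<in> U" "j \<in> U" using that by (auto simp: K_def U_def)
    then show ?thesis using U(4) that by (simp add: c_def K_def U_def)
  qed
  ultimately show ?thesis by blast
qed

section \<open>Bidiagonal and Jordan matrices\<close>

definition bidiagonal :: "nat \<Rightarrow> (nat \<Rightarrow> nat \<Rightarrow> 'a::zero) \<Rightarrow> bool" where
  "bidiagonal n M \<longleftrightarrow> (\<forall>i<n. \<forall>j<n. j \<noteq> i \<longrightarrow> j \<noteq> Suc i \<longrightarrow> M i j = 0)"

definition jordan_shaped :: "nat \<Rightarrow> (nat \<Rightarrow> nat \<Rightarrow> 'a::zero) \<Rightarrow> bool" where
  "jordan_shaped n J \<longleftrightarrow> bidiagonal n J \<and>
     (\<forall>i. Suc i < n \<longrightarrow> J i (Suc i) \<noteq> 0 \<longrightarrow> J i i = J (Suc i) (Suc i))"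

lemma jordan_shaped_diag_eq:
  assumes "jordan_shaped n J" and "i \<le> j" and "j < n"
    and "\<And>l. i \<le> l \<Longrightarrow> l < j \<Longrightarrow> J l (Suc l) \<noteq> 0"
  shows "J i i = J j j"
  using assms(2-4)
proof (induction j)
  case (Suc j)
  then show ?case
    using assms(1) by (cases "i = Suc j") (auto simp: jordan_shaped_def)
qed simp

text \<open>Column \<open>j\<close> is an eigenvector of \<open>M\<close> for the eigenvalue \<open>c j\<close>.\<close>
definition bidiag_eigenbasis ::
    "(nat \<Rightarrow> nat \<Rightarrow> complex) \<Rightarrow> (nat \<Rightarrow> complex) \<Rightarrow> nat \<Rightarrow> nat \<Rightarrow> complex" where
  "bidiag_eigenbasis M c i j =
    (if i \<le> j then \<Prod>l\<in>{i..<j}. M l (Suc l) / (c j - c l) else 0)"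

lemma bidiag_eigenbasis_lower [simp]: "j < i \<Longrightarrow> bidiag_eigenbasis M c i j = 0"
  and bidiag_eigenbasis_diag [simp]: "bidiag_eigenbasis M c i i = 1"
  by (simp_all add: bidiag_eigenbasis_def)

lemma fun_mat_mult_bidiagonal:
  assumes "bidiagonal n M" and "i < n"
  shows "fun_mat_mult n M V i j =
    M i i * V i j + (if Suc i < n then M i (Suc i) * V (Suc i) j else 0)"
proof -
  have "fun_mat_mult n M V i j = (\<Sum>k<n. (if k = i then M i i * V i j else 0) +
      (if k = Suc i then M i (Suc i) * V (Suc i) j else 0))"
    unfolding fun_mat_mult_def using assms by (intro sum.cong) (auto simp: bidiagonal_def)
  then show ?thesis using assms(2) by (simp add: sum.distrib)
qed

lemma bidiag_eigenbasis_eigen: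
  assumes bid: "bidiagonal n M" and diag: "\<And>i. i < n \<Longrightarrow> M i i = c i"
    and distinct: "\<And>i j. i < j \<Longrightarrow> j < n \<Longrightarrow>
      (\<forall>l. i \<le> l \<longrightarrow> l < j \<longrightarrow> M l (Suc l) \<noteq> 0) \<Longrightarrow> c i \<noteq> c j"
    and ij: "i < n" "j < n"
  shows "fun_mat_mult n M (bidiag_eigenbasis M c) i j = bidiag_eigenbasis M c i j * c j"
    (is "_ = ?V i j * c j")
proof -
  have row: "fun_mat_mult n M ?V i j =
      c i * ?V i j + (if Suc i < n then M i (Suc i) * ?V (Suc i) j else 0)"
    using fun_mat_mult_bidiagonal[OF bid ij(1)] diag[OF ij(1)] by simp
  consider "j \<le> i" | "i < j" by linarith
  then show ?thesis
  proof cases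
    case 1
    then show ?thesis using row by (cases "i = j") auto
  next
    case 2
    have step: "?V i j = M i (Suc i) / (c j - c i) * ?V (Suc i) j"
      using 2 by (simp add: bidiag_eigenbasis_def prod.atLeast_Suc_lessThan)
    show ?thesis
    proof (cases "c i = c j")
      case False
      then have "c i * ?V i j + M i (Suc i) * ?V (Suc i) j = ?V i j * c j"
        unfolding step by (simp add: field_simps)
      then show ?thesis using row 2 ij by simp
    next
      case True
      then obtain l where l: "i \<le> l" "l < j" "M l (Suc l) = 0" using distinct[OF 2 ij(2)] by blast
      have "M i (Suc i) * ?V (Suc i) j = 0"
      proof (cases "l = i")
        case False
        then have "(\<Prod>l\<in>{Suc i..<j}. M l (Suc l) / (c j - c l)) = 0"
          using l by (intro prod_zero) auto
        then show ?thesis using 2 by (simp add: bidiag_eigenbasis_def)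
      qed (use l in simp)
      then show ?thesis using row step True by simp
    qed
  qed
qed

lemma coninvolutory_product_bidiagonal:
  fixes M :: "nat \<Rightarrow> nat \<Rightarrow> complex"
  assumes bid: "bidiagonal CARD('n) M" and diag: "\<And>i. i < CARD('n) \<Longrightarrow> M i i = c i"
    and distinct: "\<And>i j. i < j \<Longrightarrow> j < CARD('n) \<Longrightarrow>
      (\<forall>l. i \<le> l \<longrightarrow> l < j \<longrightarrow> M l (Suc l) \<noteq> 0) \<Longrightarrow> c i \<noteq> c j"
    and paired: "conj_paired_on {..<CARD('n)} c"
  shows "coninvolutory_product (mat_of_fun M :: complex^'n::finite^'n)"
proof -
  define V where "V = (mat_of_fun (bidiag_eigenbasis M c) :: complex^'n^'n)"
  define L where "L = (mat_of_fun (diag_fun c) :: complex^'n^'n)"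
  have MV: "mat_of_fun M ** V = V ** L"
    unfolding V_def L_def mat_of_fun_mult
    by (intro mat_of_fun_cong)
       (simp add: bidiag_eigenbasis_eigen[OF bid diag distinct] fun_mat_mult_diag_right)
  have "det V = 1"
    unfolding V_def by (subst det_mat_of_fun_upper_triangular) simp_all
  then obtain W where VW: "V ** W = mat 1"
    using invertible_det_nz invertible_right_inverse by (metis one_neq_zero)
  then have "W ** V = mat 1" using matrix_left_right_inverse by blast
  then have "mat_of_fun M = V ** L ** W"
    by (metis MV VW matrix_mul_assoc matrix_mul_rid)
  then show ?thesis
    using coninvolutory_product_similar[OF VW] coninvolutory_product_diag[OF paired]
    by (simp add: L_def)
qed

lemma jordan_coninvolutory_factorization:
  fixes J :: "nat \<Rightarrow> nat \<Rightarrow> complex"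
  assumes jordan: "jordan_shaped CARD('n) J" and det: "cmod (\<Prod>k<CARD('n). J k k) = 1"
  shows "\<exists>X Y. coninvolutory_product X \<and> coninvolutory_product Y \<and> invertible (mat 1 - X) \<and>
    (mat_of_fun J :: complex^'n::finite^'n) = X ** Y"
proof -
  let ?n = "CARD('n)"
  obtain \<delta> c where \<delta>c: "\<And>k. k < ?n \<Longrightarrow> \<delta> k * c k = J k k \<and> \<delta> k \<noteq> 1"
    and paired: "conj_paired_on {..<?n} \<delta>" "conj_paired_on {..<?n} c"
    and inj: "\<And>i j. i < ?n \<Longrightarrow> j < ?n \<Longrightarrow> J i i = J j j \<Longrightarrow> c i = c j \<Longrightarrow> i = j"
    using unimodular_diag_split[OF det] by blast
  have \<delta>_nonzero: "\<delta> k \<noteq> 0" if "k < ?n" for k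
    using conj_paired_on_nonzero[OF paired(1)] that by simp
  define X where "X = (mat_of_fun (diag_fun \<delta>) :: complex^'n^'n)"
  define M where "M i j = J i j / \<delta> i" for i j
  have "coninvolutory_product (mat_of_fun M :: complex^'n^'n)"
  proof (rule coninvolutory_product_bidiagonal[OF _ _ _ paired(2)])
    show "bidiagonal ?n M" using jordan by (simp add: jordan_shaped_def bidiagonal_def M_def)
    show "M i i = c i" if "i < ?n" for i
      using \<delta>c[OF that] \<delta>_nonzero[OF that] by (auto simp: M_def field_simps)
    show "c i \<noteq> c j" if "i < j" "j < ?n" "\<forall>l. i \<le> l \<longrightarrow> l < j \<longrightarrow> M l (Suc l) \<noteq> 0" for i j
      using that inj[of i j] jordan_shaped_diag_eq[OF jordan, of i j] by (force simp: M_def)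
  qed
  moreover have "mat_of_fun J = X ** mat_of_fun M"
    unfolding X_def mat_of_fun_mult
    by (intro mat_of_fun_cong) (simp add: fun_mat_mult_diag_left M_def \<delta>_nonzero)
  moreover have "invertible (mat 1 - X)"
  proof -
    have "mat 1 - X = mat_of_fun (diag_fun (\<lambda>k. 1 - \<delta> k))"
      unfolding X_def mat_of_fun_diag_1[symmetric] mat_of_fun_diff
      by (intro mat_of_fun_cong) (simp add: diag_fun_def)
    moreover have "det (mat_of_fun (diag_fun (\<lambda>k. 1 - \<delta> k)) :: complex^'n^'n) \<noteq> 0"
      using \<delta>c by (subst det_mat_of_fun_upper_triangular) (auto simp: diag_fun_def)
    ultimately show ?thesis by (simp add: invertible_det_nz)
  qed
  ultimately show ?thesis
    using coninvolutory_product_diag[OF paired(1)] unfolding X_def by blast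
qed

lemma jordan_shaped_jordan_block: "jordan_shaped n (\<lambda>i j. jordan_block n a $$ (i, j))"
  by (simp add: jordan_shaped_def bidiagonal_def)

lemma jordan_shaped_four_block:
  assumes "A \<in> carrier_mat k k" and "B \<in> carrier_mat r r"
    and "jordan_shaped k (\<lambda>i j. A $$ (i, j))" and "jordan_shaped r (\<lambda>i j. B $$ (i, j))"
  shows "jordan_shaped (k + r) (\<lambda>i j. four_block_mat A (0\<^sub>m k r) (0\<^sub>m r k) B $$ (i, j))"
  unfolding jordan_shaped_def bidiagonal_def
proof (intro conjI allI impI)
  fix i j assume "i < k + r" "j < k + r" "j \<noteq> i" "j \<noteq> Suc i"
  then show "four_block_mat A (0\<^sub>m k r) (0\<^sub>m r k) B $$ (i, j) = 0"
    using assms by (cases "i < k"; cases "j < k") (auto simp: jordan_shaped_def bidiagonal_def)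
next
  fix i assume "Suc i < k + r" and "four_block_mat A (0\<^sub>m k r) (0\<^sub>m r k) B $$ (i, Suc i) \<noteq> 0"
  then show "four_block_mat A (0\<^sub>m k r) (0\<^sub>m r k) B $$ (i, i) =
      four_block_mat A (0\<^sub>m k r) (0\<^sub>m r k) B $$ (Suc i, Suc i)"
    using assms by (cases "Suc i < k"; cases "i < k") (auto simp: jordan_shaped_def Suc_diff_le)
qed

lemma jordan_shaped_jordan_matrix:
  "jordan_shaped (dim_row (jordan_matrix n_as)) (\<lambda>i j. jordan_matrix n_as $$ (i, j))"
proof (induction n_as)
  case Nil
  then show ?case by (simp add: jordan_shaped_def bidiagonal_def jordan_matrix_def)
next
  case (Cons ka n_as)
  obtain k a where ka: "ka = (k, a)" by force
  let ?r = "sum_list (map fst n_as)"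
  have "jordan_shaped (k + ?r) (\<lambda>i j. four_block_mat (jordan_block k a)
      (0\<^sub>m k ?r) (0\<^sub>m ?r k) (jordan_matrix n_as) $$ (i, j))"
    using Cons.IH by (intro jordan_shaped_four_block jordan_shaped_jordan_block) simp_all
  then show ?case by (simp add: ka jordan_matrix_Cons)
qed

lemma mat_of_fun_mat_mult:
  assumes "X \<in> carrier_mat CARD('n) CARD('n)" and "Y \<in> carrier_mat CARD('n) CARD('n)"
  shows "(mat_of_fun (\<lambda>i j. (X * Y) $$ (i, j)) :: 'a::comm_semiring_1^'n::finite^'n) =
    mat_of_fun (\<lambda>i j. X $$ (i, j)) ** mat_of_fun (\<lambda>i j. Y $$ (i, j))"
  unfolding mat_of_fun_mult using assms
  by (intro mat_of_fun_cong) (simp add: fun_mat_mult_def scalar_prod_def atLeast0LessThan)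

lemma mat_of_fun_one_mat:
  "(mat_of_fun (\<lambda>i j. 1\<^sub>m CARD('n) $$ (i, j)) :: 'a::{zero,one}^'n::finite^'n) = mat 1"
  unfolding mat_of_fun_diag_1[symmetric] by (intro mat_of_fun_cong) (simp add: diag_fun_def)

lemma cart_jordan_form:
  fixes A :: "complex^'n::finite^'n"
  obtains S T :: "complex^'n^'n" and J :: "nat \<Rightarrow> nat \<Rightarrow> complex"
  where "S ** T = mat 1" and "A = S ** mat_of_fun J ** T"
    and "jordan_shaped CARD('n) J"
proof -
  let ?N = "CARD('n)"
  define idx where "idx = inv_into UNIV (cart_index :: 'n \<Rightarrow> nat)"
  have idx: "idx (cart_index i) = i" for i :: 'n
    unfolding idx_def by (simp add: inj_on_def inv_into_f_f)
  define B where "B = Matrix.mat ?N ?N (\<lambda>(i, j). A $ idx i $ idx j)"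
  have B: "B \<in> carrier_mat ?N ?N" by (simp add: B_def)
  have AB: "A = mat_of_fun (\<lambda>i j. B $$ (i, j))"
    by (simp add: mat_of_fun_def B_def idx Finite_Cartesian_Product.vec_eq_iff)
  obtain es where "char_poly B = (\<Prod>a\<leftarrow>es. [:- a, 1:])" using char_poly_factorized[OF B] by blast
  from jordan_nf_exists[OF B this] obtain n_as where "jordan_nf B n_as" by blast
  then obtain P Q where "similar_mat_wit B (jordan_matrix n_as) P Q"
    by (auto simp: jordan_nf_def similar_mat_def)
  then have car: "jordan_matrix n_as \<in> carrier_mat ?N ?N"
      "P \<in> carrier_mat ?N ?N" "Q \<in> carrier_mat ?N ?N"
    and PQ: "P * Q = 1\<^sub>m ?N" and BPJQ: "B = P * jordan_matrix n_as * Q"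
    using B by (auto simp: similar_mat_wit_def Let_def)
  show thesis
  proof
    have "mat_of_fun (\<lambda>i j. P $$ (i, j)) ** mat_of_fun (\<lambda>i j. Q $$ (i, j)) =
        (mat_of_fun (\<lambda>i j. (P * Q) $$ (i, j)) :: complex^'n^'n)"
      by (rule mat_of_fun_mat_mult[OF car(2,3), symmetric])
    then show "mat_of_fun (\<lambda>i j. P $$ (i, j)) ** mat_of_fun (\<lambda>i j. Q $$ (i, j)) =
        (mat 1 :: complex^'n^'n)"
      by (simp add: PQ mat_of_fun_one_mat)
    show "A = mat_of_fun (\<lambda>i j. P $$ (i, j)) ** mat_of_fun (\<lambda>i j. jordan_matrix n_as $$ (i, j)) **
        mat_of_fun (\<lambda>i j. Q $$ (i, j))"
      unfolding AB BPJQ using car by (simp add: mat_of_fun_mat_mult matrix_mul_assoc)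
    show "jordan_shaped ?N (\<lambda>i j. jordan_matrix n_as $$ (i, j))"
      using jordan_shaped_jordan_matrix[of n_as] unfolding carrier_matD(1)[OF car(1)] .
  qed
qed

lemma matrix_diff_ldistrib:
  fixes A B C :: "'a::ring_1^'n::finite^'n"
  shows "A ** (B - C) = A ** B - A ** C"
  by (simp add: matrix_matrix_mult_def Finite_Cartesian_Product.vec_eq_iff sum_subtractf
      right_diff_distrib)

lemma matrix_diff_rdistrib:
  fixes A B C :: "'a::ring_1^'n::finite^'n"
  shows "(B - C) ** A = B ** A - C ** A"
  by (simp add: matrix_matrix_mult_def Finite_Cartesian_Product.vec_eq_iff sum_subtractf
      left_diff_distrib)

lemma coninvolutory_factorization:
  fixes A :: "complex^'n::finite^'n"
  assumes "cmod (det A) = 1"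
  shows "\<exists>X Y. coninvolutory_product X \<and> coninvolutory_product Y \<and>
    invertible (mat 1 - X) \<and> A = X ** Y"
proof -
  obtain S T :: "complex^'n^'n" and J where ST: "S ** T = mat 1" and A: "A = S ** mat_of_fun J ** T"
    and J: "jordan_shaped CARD('n) J"
    by (rule cart_jordan_form)
  have TS: "T ** S = mat 1" using ST matrix_left_right_inverse by blast
  have "det S * det T = 1" by (metis ST det_I det_mul)
  then have "det A = det (mat_of_fun J :: complex^'n^'n)" by (simp add: A det_mul)
  also have "\<dots> = (\<Prod>k<CARD('n). J k k)"
    using J by (intro det_mat_of_fun_upper_triangular) (auto simp: jordan_shaped_def bidiagonal_def)
  finally obtain X Y :: "complex^'n^'n"
    where XY: "coninvolutory_product X" "coninvolutory_product Y"
      "invertible (mat 1 - X)" "mat_of_fun J = X ** Y"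
    using jordan_coninvolutory_factorization[OF J] assms by auto
  have "(S ** X ** T) ** (S ** Y ** T) = S ** X ** (T ** S) ** Y ** T"
    by (simp add: matrix_mul_assoc)
  then have "A = (S ** X ** T) ** (S ** Y ** T)" by (simp add: TS A XY(4) matrix_mul_assoc)
  moreover have "mat 1 - S ** X ** T = S ** (mat 1 - X) ** T"
    by (simp add: matrix_diff_ldistrib matrix_diff_rdistrib ST)
  moreover have "invertible S" "invertible T" using ST TS by (auto simp: invertible_def)
  ultimately show ?thesis
    using XY coninvolutory_product_similar[OF ST] by (metis invertible_mult)
qed

theorem theorem3:
  fixes A :: "complex^'n::finite^'n" and v :: "complex^'n"
  assumes "invertible A" and "cmod (det A) = 1"
  shows "\<exists>hs :: 'n aff list. length hs \<le> 4 \<and>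
           (\<forall>h\<in>set hs. in_Aff h \<and> coninvolution h) \<and>
           foldr aff_mult hs aff_id = (A, v)"
proof -
  obtain X Y where "coninvolutory_product X" "coninvolutory_product Y"
    "invertible (mat 1 - X)" "A = X ** Y"
    using coninvolutory_factorization[OF assms(2)] by blast
  then show ?thesis using aff_four_coninvolutions by blast
qed

end
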